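(* Let $T$ be a c.n.u. contraction on $H$, let $(H_+,H_-,\Gamma_+,\Gamma_-)$ be a boundary quadruple for $A_T^{\perp_s}$ with contractive Weyl function $B$ and $\gamma$-fields $\gamma_\pm$, and let $\varphi_+=pr_1\circ\gamma_+$, $\varphi_-=pr_2\circ\gamma_-$. Then: (1) for $\lambda,\mu\in\mathbb{D}_+$ and $x,y\in H_+$: $(\varphi_+(\lambda)x,\varphi_+(\mu)y)_H=\frac{1}{1-\lambda\bar\mu}((I-B(\mu)^*B(\lambda))x,y)_{H_+}$; (2) for $\lambda,\mu\in\mathbb{D}_-$ and $x,y\in H_-$: $(\varphi_-(\lambda)x,\varphi_-(\mu)y)_H=\frac{1}{1-\lambda\bar\mu}((I-B(\bar\mu)B(\bar\lambda)^* )x,y)_{H_-}$; (3) for $\lambda\in\mathbb{D}_+$, $\mu\in\mathbb{D}_-$, $x\in H_+$, $y\in H_-$: $(\varphi_+(\lambda)x,\varphi_-(\mu)y)_H=\frac{1}{\lambda-\bar\mu}((B(\lambda)-B(\bar\mu))x,y)_{H_-}$, where for $\lambda=\bar\mu$ the right-hand side is understood as its limit.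
   Context: $H$ is an infinite-dimensional separable complex Hilbert space; $T\in\mathbb{B}(H)$, $\|T\|\le1$, is completely non-unitary. $\mathbb{K}=\ker(I-T^*T)$. $\mathbb{H}=H\oplus_\perp H$ with $[(x_1,x_2),(y_1,y_2)]=i(x_1,y_1)_H-i(x_2,y_2)_H$; $S^{\perp_s}=\{a:[a,b]=0\ \forall b\in S\}$; $A_T=\{(x,Tx):x\in\mathbb{K}\}$. $\mathbb{D}_\pm$ are two copies of the open unit disc (coordinates $\lambda$ with $|\lambda|<1$); for $\lambda\in\mathbb{D}_\pm$, $\bar\lambda$ denotes the complex conjugate coordinate, regarded as a point of $\mathbb{D}_\mp$ where appropriate. $N_\lambda=\{(x,\lambda x):x\in H\}\cap A_T^{\perp_s}$ for $\lambda\in\mathbb{D}_+$, $N_\lambda=\{(\lambda x,x):x\in H\}\cap A_T^{\perp_s}$ for $\lambda\in\mathbb{D}_-$. A boundary quadruple for $A_T^{\perp_s}$ is $(H_+,H_-,\Gamma_+,\Gamma_-)$, $H_\pm$ Hilbert spaces, $\Gamma_\pm:A_T^{\perp_s}\to H_\pm$ linear, with $(\Gamma_+,\Gamma_-)$ bounded, surjective onto $H_+\oplus_\perp H_-$, kernel $A_T$, and $[a,b]=i(\Gamma_+a,\Gamma_+b)_{H_+}-i(\Gamma_-a,\Gamma_-b)_{H_-}$. For such a quadruple: for $\lambda\in\mathbb{D}_+$, $\Gamma_+|_{N_\lambda}$ is a bijection onto $H_+$ and there is a unique $B(\lambda)\in\mathbb{B}(H_+,H_-)$ with $\Gamma_-a=B(\lambda)\Gamma_+a$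 for $a\in N_\lambda$; for $\lambda\in\mathbb{D}_-$, $\Gamma_-|_{N_\lambda}$ is a bijection onto $H_-$ and $\Gamma_+a=B(\bar\lambda)^*\Gamma_-a$ for $a\in N_\lambda$. $B$ is holomorphic on $\mathbb{D}_+$ with $\|B(\lambda)\|<1$ (the contractive Weyl function). The $\gamma$-fields are $\gamma_+(\lambda)x\in N_\lambda$ with $\Gamma_+\gamma_+(\lambda)x=x$ ($\lambda\in\mathbb{D}_+$, $x\in H_+$) and $\gamma_-(\lambda)x\in N_\lambda$ with $\Gamma_-\gamma_-(\lambda)x=x$ ($\lambda\in\mathbb{D}_-$, $x\in H_-$). $pr_1,pr_2$ are the projections of $\mathbb{H}$ onto its first and second copy of $H$. *)

theory Defs
  imports "HOL-Analysis.Analysis"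
begin

text \<open>A complex Hilbert space is modelled as a
real Hilbert space (class real_inner + complete_space) with a complex scalar multiplication
extending the real one, multiplication by i being isometric for the real inner product.
The complex inner product (linear in the first, conjugate linear in the second argument)
is then cinner x y = <x,y> + i <x, i y>, and its induced norm is the norm of the class.\<close>

class complex_hilbert = real_inner + complete_space +
  fixes scaleC :: "complex \<Rightarrow> 'a \<Rightarrow> 'a"
  assumes scaleC_add_right: "scaleC c (x + y) = scaleC c x + scaleC c y"
    and scaleC_add_left: "scaleC (c + d) x = scaleC c x + scaleC d x"
    and scaleC_scaleC: "scaleC c (scaleC d x) = scaleC (c * d) x"
    and scaleC_of_real: "scaleC (complex_of_real r) x = scaleR r x"
    and inner_scaleC_ii: "inner (scaleC \<i> x) (scaleC \<i> y) = inner x y"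

definition cinner :: "'a::complex_hilbert \<Rightarrow> 'a \<Rightarrow> complex" where
  "cinner x y = complex_of_real (inner x y) + \<i> * complex_of_real (inner x (scaleC \<i> y))"

definition clinear :: "('a::complex_hilbert \<Rightarrow> 'b::complex_hilbert) \<Rightarrow> bool" where
  "clinear f \<longleftrightarrow> (\<forall>x y. f (x + y) = f x + f y) \<and> (\<forall>c x. f (scaleC c x) = scaleC c (f x))"

definition cbounded :: "('a::complex_hilbert \<Rightarrow> 'b::complex_hilbert) \<Rightarrow> bool" where
  "cbounded f \<longleftrightarrow> clinear f \<and> (\<exists>K. \<forall>x. norm (f x) \<le> K * norm x)"

definition adj :: "('a::complex_hilbert \<Rightarrow> 'b::complex_hilbert) \<Rightarrow> 'b \<Rightarrow> 'a" where
  "adj f = (THE g. \<forall>x y. cinner (f x) y = cinner x (g y))"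

definition csubspace :: "'a::complex_hilbert set \<Rightarrow> bool" where
  "csubspace M \<longleftrightarrow> 0 \<in> M \<and> (\<forall>x\<in>M. \<forall>y\<in>M. x + y \<in> M) \<and> (\<forall>c. \<forall>x\<in>M. scaleC c x \<in> M)"

definition cnu :: "('a::complex_hilbert \<Rightarrow> 'a) \<Rightarrow> bool" where
  "cnu T \<longleftrightarrow> \<not> (\<exists>M. csubspace M \<and> closed M \<and> M \<noteq> {0} \<and> T ` M \<subseteq> M \<and> adj T ` M \<subseteq> M
              \<and> (\<forall>x\<in>M. adj T (T x) = x \<and> T (adj T x) = x))"

definition separable_space :: "'a::topological_space itself \<Rightarrow> bool" where
  "separable_space _ \<longleftrightarrow> (\<exists>D::'a set. countable D \<and> closure D = UNIV)"

definition infinite_dimensional :: "'a::complex_hilbert itself \<Rightarrow> bool" where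
  "infinite_dimensional _ \<longleftrightarrow> (\<exists>S::'a set. infinite S \<and> independent S)"

text \<open>The space H (+) H is modelled as the product type 'h \<times> 'h.\<close>

definition KK :: "('h::complex_hilbert \<Rightarrow> 'h) \<Rightarrow> 'h set" where
  "KK T = {x. x - adj T (T x) = 0}"

definition AT :: "('h::complex_hilbert \<Rightarrow> 'h) \<Rightarrow> ('h \<times> 'h) set" where
  "AT T = {(x, T x) | x. x \<in> KK T}"

definition symp :: "'h::complex_hilbert \<times> 'h \<Rightarrow> 'h \<times> 'h \<Rightarrow> complex" where
  "symp a b = \<i> * cinner (fst a) (fst b) - \<i> * cinner (snd a) (snd b)"

definition sperp :: "('h::complex_hilbert \<times> 'h) set \<Rightarrow> ('h \<times> 'h) set" where
  "sperp S = {a. \<forall>b\<in>S. symp a b = 0}"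

definition scaleC2 :: "complex \<Rightarrow> 'h::complex_hilbert \<times> 'h \<Rightarrow> 'h \<times> 'h" where
  "scaleC2 c a = (scaleC c (fst a), scaleC c (snd a))"

definition Nplus :: "('h::complex_hilbert \<Rightarrow> 'h) \<Rightarrow> complex \<Rightarrow> ('h \<times> 'h) set" where
  "Nplus T l = {(x, scaleC l x) | x. True} \<inter> sperp (AT T)"

definition Nminus :: "('h::complex_hilbert \<Rightarrow> 'h) \<Rightarrow> complex \<Rightarrow> ('h \<times> 'h) set" where
  "Nminus T l = {(scaleC l x, x) | x. True} \<inter> sperp (AT T)"

definition boundary_quadruple ::
  "('h::complex_hilbert \<Rightarrow> 'h) \<Rightarrow> ('h \<times> 'h \<Rightarrow> 'p::complex_hilbert) \<Rightarrow> ('h \<times> 'h \<Rightarrow> 'm::complex_hilbert) \<Rightarrow> bool" where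
  "boundary_quadruple T Gp Gm \<longleftrightarrow>
     (let W = sperp (AT T) in
       (\<forall>a\<in>W. \<forall>b\<in>W. Gp (a + b) = Gp a + Gp b \<and> Gm (a + b) = Gm a + Gm b)
     \<and> (\<forall>c. \<forall>a\<in>W. Gp (scaleC2 c a) = scaleC c (Gp a) \<and> Gm (scaleC2 c a) = scaleC c (Gm a))
     \<and> (\<exists>K. \<forall>a\<in>W. norm (Gp a, Gm a) \<le> K * norm a)
     \<and> (\<forall>u v. \<exists>a\<in>W. Gp a = u \<and> Gm a = v)
     \<and> {a\<in>W. Gp a = 0 \<and> Gm a = 0} = AT T
     \<and> (\<forall>a\<in>W. \<forall>b\<in>W. symp a b = \<i> * cinner (Gp a) (Gp b) - \<i> * cinner (Gm a) (Gm b)))"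

end

theory Submission
  imports Defs
begin

text \<open>Every value of a \<gamma>-field lies in some N(\<lambda>), the graph of multiplication
by \<lambda> (or its inverse graph), so the symplectic form of two such vectors is an explicit
multiple of the inner product of their first or second components. The Green identity of the
boundary quadruple expresses the same form through \<Gamma>+ and \<Gamma>-, which on N(\<lambda>)
are related by B(\<lambda>); comparing the two gives (1)--(3). The same comparison for N(\<mu>)
and N(cnj \<mu>), whose symplectic form vanishes, identifies the adjoint of B(\<mu>) with
\<Gamma>+ \<gamma>-(cnj \<mu>). For \<lambda> = cnj \<mu> the limit in (3) follows from continuity of
pr2 \<gamma>-: a difference of two values of \<gamma>- lies in the kernel of \<Gamma>-, where the Green
identity makes pr2 dominated by pr1.\<close>

lemma scaleC_m1: "scaleC (-1) (x::'a::complex_hilbert) = - x"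
  using scaleC_of_real[of "-1" x] by simp

lemma scaleC_minus_left: "scaleC (-c) (x::'a::complex_hilbert) = - scaleC c x"
  using scaleC_scaleC[of "-1" c x] by (simp add: scaleC_m1)

lemma scaleC_minus_right: "scaleC c (- x::'a::complex_hilbert) = - scaleC c x"
  using scaleC_scaleC[of c "-1" x] scaleC_scaleC[of "-1" c x] by (simp add: scaleC_m1)

lemma scaleC_diff_right: "scaleC c (x - y::'a::complex_hilbert) = scaleC c x - scaleC c y"
  by (simp only: diff_conv_add_uminus scaleC_add_right scaleC_minus_right)

lemma scaleC_diff_left: "scaleC (c - d) (x::'a::complex_hilbert) = scaleC c x - scaleC d x"
  by (simp only: diff_conv_add_uminus scaleC_add_left scaleC_minus_left)

lemma inner_scaleC_ii_left: "inner (scaleC \<i> x) (y::'a::complex_hilbert) = - inner x (scaleC \<i> y)"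
proof -
  have "inner (scaleC \<i> x) y = inner (scaleC \<i> (scaleC \<i> x)) (scaleC \<i> y)"
    by (simp add: inner_scaleC_ii)
  also have "scaleC \<i> (scaleC \<i> x) = - x"
    by (simp add: scaleC_scaleC scaleC_m1)
  finally show ?thesis by simp
qed

lemma scaleC_Re_Im: "scaleC c (x::'a::complex_hilbert) = Re c *\<^sub>R x + Im c *\<^sub>R scaleC \<i> x"
proof -
  have "c = complex_of_real (Re c) + complex_of_real (Im c) * \<i>"
    by (simp add: complex_eq_iff)
  then have "scaleC c x = scaleC (complex_of_real (Re c)) x + scaleC (complex_of_real (Im c)) (scaleC \<i> x)"
    by (metis scaleC_add_left scaleC_scaleC)
  then show ?thesis by (simp add: scaleC_of_real)
qed

lemma cinner_add_left: "cinner (x + y) (z::'a::complex_hilbert) = cinner x z + cinner y z"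
  by (simp add: cinner_def inner_add_left algebra_simps)

lemma cinner_scaleC_left: "cinner (scaleC c x) (z::'a::complex_hilbert) = c * cinner x z"
proof -
  have ii: "cinner (scaleC \<i> x) z = \<i> * cinner x z"
    by (simp add: cinner_def inner_scaleC_ii_left inner_scaleC_ii scaleC_scaleC scaleC_m1 algebra_simps)
  have scaleR: "cinner (r *\<^sub>R v) z = of_real r * cinner v z" for r v
    by (simp add: cinner_def algebra_simps)
  have "cinner (scaleC c x) z = of_real (Re c) * cinner x z + of_real (Im c) * (\<i> * cinner x z)"
    by (subst scaleC_Re_Im) (simp only: cinner_add_left scaleR ii)
  also have "\<dots> = c * cinner x z"
    by (simp add: algebra_simps complex_eq_iff)
  finally show ?thesis .
qed

lemma cinner_commute: "cinner y (x::'a::complex_hilbert) = cnj (cinner x y)"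
  using inner_scaleC_ii_left[of x y]
  by (simp add: cinner_def complex_eq_iff inner_commute)

lemma cinner_scaleC_right: "cinner z (scaleC c x::'a::complex_hilbert) = cnj c * cinner z x"
  by (subst (1 2) cinner_commute) (simp add: cinner_scaleC_left)

lemma cinner_diff_left: "cinner (x - y) (z::'a::complex_hilbert) = cinner x z - cinner y z"
  by (simp add: cinner_def inner_diff_left algebra_simps)

lemma cinner_diff_right: "cinner z (x - y::'a::complex_hilbert) = cinner z x - cinner z y"
  by (subst (1 2 3) cinner_commute) (simp add: cinner_diff_left)

lemma cinner_self: "cinner x (x::'a::complex_hilbert) = of_real ((norm x)\<^sup>2)"
  using inner_scaleC_ii_left[of x x]
  by (simp add: cinner_def power2_norm_eq_inner inner_commute)

lemma norm_scaleC: "norm (scaleC c (x::'a::complex_hilbert)) = cmod c * norm x"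
proof -
  have "of_real ((norm (scaleC c x))\<^sup>2) = cinner (scaleC c x) (scaleC c x)"
    by (simp only: cinner_self)
  also have "\<dots> = c * cnj c * cinner x x"
    by (simp add: cinner_scaleC_left cinner_scaleC_right)
  also have "\<dots> = of_real ((cmod c * norm x)\<^sup>2)"
    by (simp add: cinner_self complex_norm_square[symmetric] power_mult_distrib)
  finally have "(norm (scaleC c x))\<^sup>2 = (cmod c * norm x)\<^sup>2"
    using of_real_eq_iff by blast
  then show ?thesis
    by (simp add: power2_eq_iff_nonneg)
qed

lemma adj_eqI:
  assumes "\<And>x z. cinner (f x) z = cinner x (g z)"
  shows "adj f = g"
  unfolding adj_def
proof (rule the_equality)
  fix g' assume g': "\<forall>x z. cinner (f x) z = cinner x (g' z)"
  show "g' = g"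
  proof
    fix z
    have "cinner (g' z - g z) (g' z - g z) = 0"
      using g' assms by (simp add: cinner_diff_left cinner_diff_right)
    then show "g' z = g z"
      by (simp add: cinner_self)
  qed
qed (use assms in blast)

lemma norm_cinner_le: "cmod (cinner x (y::'a::complex_hilbert)) \<le> 2 * norm x * norm y"
proof -
  have "cmod (cinner x y) \<le> \<bar>inner x y\<bar> + \<bar>inner x (scaleC \<i> y)\<bar>"
    unfolding cinner_def
    by (rule order_trans[OF norm_triangle_ineq]) (simp add: norm_mult)
  also have "\<dots> \<le> norm x * norm y + norm x * norm (scaleC \<i> y)"
    by (intro add_mono Cauchy_Schwarz_ineq2)
  finally show ?thesis
    by (simp add: norm_scaleC)
qed

lemma tendsto_cinner_right:
  fixes f :: "'b \<Rightarrow> 'a::complex_hilbert"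
  assumes "(f \<longlongrightarrow> a) F"
  shows "((\<lambda>n. cinner u (f n)) \<longlongrightarrow> cinner u a) F"
proof -
  have "((\<lambda>n. 2 * norm u * norm (f n - a)) \<longlongrightarrow> 0) F"
    using tendsto_mult_right_zero[OF tendsto_norm_zero[OF LIM_zero[OF assms]]] .
  then have "((\<lambda>n. cinner u (f n) - cinner u a) \<longlongrightarrow> 0) F"
    by (rule Lim_null_comparison[rotated])
      (simp add: cinner_diff_right[symmetric] norm_cinner_le)
  then show ?thesis
    by (rule LIM_zero_cancel)
qed

lemma one_minus_mult_cnj_neq_0:
  assumes "cmod l < 1" and "cmod m < 1"
  shows "1 - l * cnj m \<noteq> 0"
proof -
  have "cmod (l * cnj m) < 1"
    using assms mult_strict_mono'[of "cmod l" 1 "cmod m" 1] by (simp add: norm_mult)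
  then show ?thesis by auto
qed

lemma symp_diff_left: "symp (a - b) k = symp a k - symp (b::'h::complex_hilbert \<times> 'h) k"
  by (simp add: symp_def cinner_diff_left algebra_simps)

lemma sperp_diff: "a \<in> sperp S \<Longrightarrow> b \<in> sperp S \<Longrightarrow> a - b \<in> sperp S"
  by (simp add: sperp_def symp_diff_left)

lemma symp_graph_graph:
  assumes "snd a = scaleC l (fst a)" and "snd b = scaleC m (fst (b::'h::complex_hilbert \<times> 'h))"
  shows "symp a b = \<i> * ((1 - l * cnj m) * cinner (fst a) (fst b))"
  using assms by (simp add: symp_def cinner_scaleC_left cinner_scaleC_right algebra_simps)

lemma symp_cograph_cograph:
  assumes "fst a = scaleC l (snd a)" and "fst b = scaleC m (snd (b::'h::complex_hilbert \<times> 'h))"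
  shows "symp a b = - \<i> * ((1 - l * cnj m) * cinner (snd a) (snd b))"
  using assms by (simp add: symp_def cinner_scaleC_left cinner_scaleC_right algebra_simps)

lemma symp_graph_cograph:
  assumes "snd a = scaleC l (fst a)" and "fst b = scaleC m (snd (b::'h::complex_hilbert \<times> 'h))"
  shows "symp a b = - \<i> * ((l - cnj m) * cinner (fst a) (snd b))"
  using assms by (simp add: symp_def cinner_scaleC_left cinner_scaleC_right algebra_simps)

locale weyl_gamma_fields =
  fixes T :: "'h::complex_hilbert \<Rightarrow> 'h"
    and Gp :: "'h \<times> 'h \<Rightarrow> 'p::complex_hilbert"
    and Gm :: "'h \<times> 'h \<Rightarrow> 'm::complex_hilbert"
    and B :: "complex \<Rightarrow> 'p \<Rightarrow> 'm"
    and gp :: "complex \<Rightarrow> 'p \<Rightarrow> 'h \<times> 'h"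
    and gm :: "complex \<Rightarrow> 'm \<Rightarrow> 'h \<times> 'h"
  assumes bq: "boundary_quadruple T Gp Gm"
    and B_weyl: "\<forall>l\<in>ball 0 1. \<forall>a\<in>Nplus T l. Gm a = B l (Gp a)"
    and gp_field: "\<forall>l\<in>ball 0 1. \<forall>x. gp l x \<in> Nplus T l \<and> Gp (gp l x) = x"
    and gm_field: "\<forall>l\<in>ball 0 1. \<forall>x. gm l x \<in> Nminus T l \<and> Gm (gm l x) = x"
begin

lemma green_identity:
  "a \<in> sperp (AT T) \<Longrightarrow> b \<in> sperp (AT T) \<Longrightarrow>
     symp a b = \<i> * cinner (Gp a) (Gp b) - \<i> * cinner (Gm a) (Gm b)"
  using bq by (simp add: boundary_quadruple_def Let_def)

lemma Gm_diff:
  assumes a: "a \<in> sperp (AT T)" and b: "b \<in> sperp (AT T)"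
  shows "Gm (a - b) = Gm a - Gm b"
proof -
  have "\<forall>a\<in>sperp (AT T). \<forall>b\<in>sperp (AT T). Gm (a + b) = Gm a + Gm b"
    using bq by (simp add: boundary_quadruple_def Let_def)
  then have "Gm ((a - b) + b) = Gm (a - b) + Gm b"
    using sperp_diff[OF a b] b by blast
  then show ?thesis by simp
qed

context
  fixes l :: complex
  assumes l: "l \<in> ball 0 1"
begin

lemma gp_in_Nplus: "gp l x \<in> Nplus T l"
  and Gp_gp: "Gp (gp l x) = x"
  using gp_field l by blast+

lemma gp_in_sperp: "gp l x \<in> sperp (AT T)"
  and snd_gp: "snd (gp l x) = scaleC l (fst (gp l x))"
  using gp_in_Nplus[of x] by (auto simp: Nplus_def)

lemma Gm_gp: "Gm (gp l x) = B l x"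
  using B_weyl l gp_in_Nplus Gp_gp by metis

lemma gm_in_Nminus: "gm l x \<in> Nminus T l"
  and Gm_gm: "Gm (gm l x) = x"
  using gm_field l by blast+

lemma gm_in_sperp: "gm l x \<in> sperp (AT T)"
  and fst_gm: "fst (gm l x) = scaleC l (snd (gm l x))"
  using gm_in_Nminus[of x] by (auto simp: Nminus_def)

end

lemma cinner_weyl_Gp_gm:
  assumes m: "m \<in> ball 0 1"
  shows "cinner (B m x) z = cinner x (Gp (gm (cnj m) z))"
proof -
  have m': "cnj m \<in> ball 0 1" using m by simp
  have "symp (gp m x) (gm (cnj m) z) = 0"
    using symp_graph_cograph[OF snd_gp[OF m] fst_gm[OF m']] by simp
  moreover have "symp (gp m x) (gm (cnj m) z) = \<i> * cinner x (Gp (gm (cnj m) z)) - \<i> * cinner (B m x) z"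
    using green_identity gp_in_sperp[OF m] gm_in_sperp[OF m']
    by (simp add: Gp_gp[OF m] Gm_gp[OF m] Gm_gm[OF m'])
  ultimately show ?thesis
    by (simp add: right_diff_distrib[symmetric])
qed

lemma adj_weyl: "m \<in> ball 0 1 \<Longrightarrow> adj (B m) = (\<lambda>z. Gp (gm (cnj m) z))"
  by (rule adj_eqI) (rule cinner_weyl_Gp_gm)

lemma cinner_weyl_adj: "m \<in> ball 0 1 \<Longrightarrow> cinner (B m x) z = cinner x (adj (B m) z)"
  by (simp add: adj_weyl cinner_weyl_Gp_gm)

lemma Gp_gm: "l \<in> ball 0 1 \<Longrightarrow> Gp (gm l z) = adj (B (cnj l)) z"
  using adj_weyl[of "cnj l"] by simp

lemma cinner_fst_gp:
  assumes l: "l \<in> ball 0 1" and m: "m \<in> ball 0 1"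
  shows "cinner (fst (gp l x)) (fst (gp m y)) = cinner (x - adj (B m) (B l x)) y / (1 - l * cnj m)"
proof -
  have "\<i> * ((1 - l * cnj m) * cinner (fst (gp l x)) (fst (gp m y))) = symp (gp l x) (gp m y)"
    using symp_graph_graph[OF snd_gp[OF l] snd_gp[OF m]] by simp
  also have "\<dots> = \<i> * (cinner x y - cinner (B l x) (B m y))"
    using green_identity gp_in_sperp[OF l] gp_in_sperp[OF m]
    by (simp add: Gp_gp[OF l] Gp_gp[OF m] Gm_gp[OF l] Gm_gp[OF m] right_diff_distrib)
  also have "cinner (B l x) (B m y) = cinner (adj (B m) (B l x)) y"
    using cinner_weyl_adj[OF m, of y "B l x"] by (metis cinner_commute)
  finally show ?thesis
    using one_minus_mult_cnj_neq_0[of l m] l m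
    by (simp add: cinner_diff_left eq_divide_eq mult.commute)
qed

lemma cinner_snd_gm:
  assumes l: "l \<in> ball 0 1" and m: "m \<in> ball 0 1"
  shows "cinner (snd (gm l x)) (snd (gm m y))
    = cinner (x - B (cnj m) (adj (B (cnj l)) x)) y / (1 - l * cnj m)"
proof -
  have "- \<i> * ((1 - l * cnj m) * cinner (snd (gm l x)) (snd (gm m y))) = symp (gm l x) (gm m y)"
    using symp_cograph_cograph[OF fst_gm[OF l] fst_gm[OF m]] by simp
  also have "\<dots> = - \<i> * (cinner x y - cinner (adj (B (cnj l)) x) (adj (B (cnj m)) y))"
    using green_identity gm_in_sperp[OF l] gm_in_sperp[OF m]
    by (simp add: Gp_gm[OF l] Gp_gm[OF m] Gm_gm[OF l] Gm_gm[OF m] right_diff_distrib)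
  also have "cinner (adj (B (cnj l)) x) (adj (B (cnj m)) y) = cinner (B (cnj m) (adj (B (cnj l)) x)) y"
    using cinner_weyl_adj[of "cnj m"] m by simp
  finally show ?thesis
    using one_minus_mult_cnj_neq_0[of l m] l m
    by (simp add: cinner_diff_left eq_divide_eq mult.commute)
qed

lemma cinner_fst_gp_snd_gm:
  assumes l: "l \<in> ball 0 1" and m: "m \<in> ball 0 1" and "l \<noteq> cnj m"
  shows "cinner (fst (gp l x)) (snd (gm m y)) = cinner (B l x - B (cnj m) x) y / (l - cnj m)"
proof -
  have "- \<i> * ((l - cnj m) * cinner (fst (gp l x)) (snd (gm m y))) = symp (gp l x) (gm m y)"
    using symp_graph_cograph[OF snd_gp[OF l] fst_gm[OF m]] by simp
  also have "\<dots> = - \<i> * (cinner (B l x) y - cinner x (adj (B (cnj m)) y))"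
    using green_identity gp_in_sperp[OF l] gm_in_sperp[OF m]
    by (simp add: Gp_gp[OF l] Gm_gp[OF l] Gp_gm[OF m] Gm_gm[OF m] right_diff_distrib)
  also have "cinner x (adj (B (cnj m)) y) = cinner (B (cnj m) x) y"
    using cinner_weyl_adj[of "cnj m"] m by simp
  finally show ?thesis
    using assms(3) by (simp add: cinner_diff_left eq_divide_eq mult.commute)
qed

lemma norm_snd_le_norm_fst:
  assumes "a \<in> sperp (AT T)" and "Gm a = 0"
  shows "norm (snd a) \<le> norm (fst a)"
proof -
  have "\<i> * (cinner (fst a) (fst a) - cinner (snd a) (snd a)) = \<i> * cinner (Gp a) (Gp a)"
    using green_identity[OF assms(1) assms(1)] assms(2)
    by (simp add: symp_def cinner_self right_diff_distrib)
  then have "cinner (fst a) (fst a) - cinner (snd a) (snd a) = cinner (Gp a) (Gp a)"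
    by simp
  then have "(norm (fst a))\<^sup>2 - (norm (snd a))\<^sup>2 = (norm (Gp a))\<^sup>2"
    unfolding cinner_self of_real_diff[symmetric] of_real_eq_iff .
  then have "(norm (snd a))\<^sup>2 \<le> (norm (fst a))\<^sup>2"
    by (metis diff_ge_0_iff_ge zero_le_power2)
  then show ?thesis
    by (simp add: power2_le_iff_abs_le)
qed

lemma norm_snd_gm_diff_le:
  assumes n: "n \<in> ball 0 1" and n': "n' \<in> ball 0 1"
  shows "norm (snd (gm n y) - snd (gm n' y)) * (1 - cmod n) \<le> cmod (n - n') * norm (snd (gm n' y))"
proof -
  define a where "a = gm n y - gm n' y"
  have a: "a \<in> sperp (AT T)" "Gm a = 0"
    unfolding a_def using gm_in_sperp[OF n] gm_in_sperp[OF n']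
    by (simp_all add: sperp_diff Gm_diff Gm_gm[OF n] Gm_gm[OF n'])
  have "fst a = scaleC n (snd a) + scaleC (n - n') (snd (gm n' y))"
    using fst_gm[OF n] fst_gm[OF n'] by (simp add: a_def scaleC_diff_right scaleC_diff_left)
  then have "norm (fst a) \<le> cmod n * norm (snd a) + cmod (n - n') * norm (snd (gm n' y))"
    by (metis norm_scaleC norm_triangle_ineq)
  then have "norm (snd a) \<le> cmod n * norm (snd a) + cmod (n - n') * norm (snd (gm n' y))"
    using norm_snd_le_norm_fst[OF a] by linarith
  moreover have "snd a = snd (gm n y) - snd (gm n' y)"
    by (simp add: a_def)
  ultimately show ?thesis
    by (simp add: algebra_simps)
qed

lemma isCont_snd_gm:
  assumes l: "l \<in> ball 0 1"
  shows "isCont (\<lambda>n. snd (gm n y)) l"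
  unfolding isCont_def
proof (rule LIM_zero_cancel, rule Lim_null_comparison)
  show "\<forall>\<^sub>F n in at l. norm (snd (gm n y) - snd (gm l y)) \<le> cmod (n - l) * norm (snd (gm l y)) / (1 - cmod n)"
    using eventually_at_in_open[OF open_ball l]
  proof (rule eventually_mono)
    fix n assume "n \<in> ball 0 1 - {l}"
    then show "norm (snd (gm n y) - snd (gm l y)) \<le> cmod (n - l) * norm (snd (gm l y)) / (1 - cmod n)"
      using norm_snd_gm_diff_le[of n l y] l by (simp add: pos_le_divide_eq)
  qed
  have "((\<lambda>n. cmod (n - l) * norm (snd (gm l y)) / (1 - cmod n))
      \<longlongrightarrow> cmod (l - l) * norm (snd (gm l y)) / (1 - cmod l)) (at l)"
    using l by (intro tendsto_intros) auto
  then show "((\<lambda>n. cmod (n - l) * norm (snd (gm l y)) / (1 - cmod n)) \<longlongrightarrow> 0) (at l)"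
    by simp
qed

lemma cinner_fst_gp_snd_gm_limit:
  assumes m: "m \<in> ball 0 1" and l: "l = cnj m"
  shows "((\<lambda>n. cinner (B l x - B n x) y / (l - n)) \<longlongrightarrow> cinner (fst (gp l x)) (snd (gm m y))) (at l)"
proof -
  have l_ball: "l \<in> ball 0 1"
    using l m by simp
  have "isCont (\<lambda>n. snd (gm (cnj n) y)) l"
    using isCont_o2[OF isCont_cnj[OF continuous_ident] isCont_snd_gm] l m by simp
  then have "((\<lambda>n. cinner (fst (gp l x)) (snd (gm (cnj n) y)))
      \<longlongrightarrow> cinner (fst (gp l x)) (snd (gm m y))) (at l)"
    unfolding isCont_def l by (simp add: tendsto_cinner_right)
  moreover have "\<forall>\<^sub>F n in at l. cinner (fst (gp l x)) (snd (gm (cnj n) y)) = cinner (B l x - B n x) y / (l - n)"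
    using eventually_at_in_open[OF open_ball l_ball]
    by eventually_elim (use l_ball cinner_fst_gp_snd_gm in auto)
  ultimately show ?thesis
    by (rule Lim_transform_eventually)
qed

end

theorem proposition4p12:
  fixes T :: "'h::complex_hilbert \<Rightarrow> 'h"
    and Gp :: "'h \<times> 'h \<Rightarrow> 'p::complex_hilbert"
    and Gm :: "'h \<times> 'h \<Rightarrow> 'm::complex_hilbert"
    and B :: "complex \<Rightarrow> 'p \<Rightarrow> 'm"
    and gp :: "complex \<Rightarrow> 'p \<Rightarrow> 'h \<times> 'h"
    and gm :: "complex \<Rightarrow> 'm \<Rightarrow> 'h \<times> 'h"
  assumes sep: "separable_space TYPE('h)"
    and infdim: "infinite_dimensional TYPE('h)"
    and T_bdd: "cbounded T"
    and T_contr: "\<forall>x. norm (T x) \<le> norm x"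
    and T_cnu: "cnu T"
    and bq: "boundary_quadruple T Gp Gm"
    and B_weyl: "\<forall>l\<in>ball 0 1. \<forall>a\<in>Nplus T l. Gm a = B l (Gp a)"
    and gp_field: "\<forall>l\<in>ball 0 1. \<forall>x. gp l x \<in> Nplus T l \<and> Gp (gp l x) = x"
    and gm_field: "\<forall>l\<in>ball 0 1. \<forall>x. gm l x \<in> Nminus T l \<and> Gm (gm l x) = x"
  shows
    "(\<forall>l\<in>ball 0 1. \<forall>m\<in>ball 0 1. \<forall>x y.
        cinner (fst (gp l x)) (fst (gp m y))
          = cinner (x - adj (B m) (B l x)) y / (1 - l * cnj m))
   \<and> (\<forall>l\<in>ball 0 1. \<forall>m\<in>ball 0 1. \<forall>x y.
        cinner (snd (gm l x)) (snd (gm m y))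
          = cinner (x - B (cnj m) (adj (B (cnj l)) x)) y / (1 - l * cnj m))
   \<and> (\<forall>l\<in>ball 0 1. \<forall>m\<in>ball 0 1. \<forall>x y.
        (l \<noteq> cnj m \<longrightarrow>
           cinner (fst (gp l x)) (snd (gm m y)) = cinner (B l x - B (cnj m) x) y / (l - cnj m))
      \<and> (l = cnj m \<longrightarrow>
           ((\<lambda>n. cinner (B l x - B n x) y / (l - n)) \<longlongrightarrow> cinner (fst (gp l x)) (snd (gm m y))) (at l)))"
proof -
  \<comment> \<open>Only the boundary quadruple structure enters.\<close>
  interpret weyl_gamma_fields T Gp Gm B gp gm
    using bq B_weyl gp_field gm_field by unfold_locales
  show ?thesis
    using cinner_fst_gp cinner_snd_gm cinner_fst_gp_snd_gm cinner_fst_gp_snd_gm_limit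
    by auto
qed

end
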